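(* Let $N\geq 2$ and let $P_N(z)=z^N+\sum_{m=1}^{N} c_m z^{N-m}=\prod_{n=1}^{N}(z-x_n)$ be a monic polynomial with complex coefficients $c_1,\dots,c_N$ and zeros $x_1,\dots,x_N$. Choose complex numbers $y_1(0),\dots,y_N(0)$, pairwise distinct, and define $$\gamma_m(0)=(-1)^m\sum_{N\geq n_1>n_2>\dots>n_m\geq 1} y_{n_1}(0)\,y_{n_2}(0)\cdots y_{n_m}(0),\qquad m=1,\dots,N,$$ so that $z^N+\sum_{m=1}^N\gamma_m(0)z^{N-m}=\prod_{n=1}^N(z-y_n(0))$. Let $y_1(t),\dots,y_N(t)$, $t$ real, be the solution with these initial values of the system $$\dot y_n(t)=-\Big\{\prod_{\ell=1,\ \ell\neq n}^{N}\big[y_n(t)-y_\ell(t)\big]^{-1}\Big\}\sum_{m=1}^{N}\big[c_m-\gamma_m(0)\big]\,\big[y_n(t)\big]^{N-m},\qquad n=1,\dots,N,$$ and suppose this solution exists on the whole interval $0\leq t\leq 1$ with $y_n(t)\neq y_\ell(t)$ for all $n\neq \ell$ and all $t\in[0,1]$. Then $x_n=y_n(1)$ for $n=1,\dots,N$ (as unordered sets, i.e. up to relabelling, $\{y_1(1),\dots,y_N(1)\}$ is the set of zeros of $P_N$ counted with multiplicity).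
   Context: A superimposed dot denotes differentiation with respect to the real variable $t$. The zeros of a polynomial are regarded as an unordered set. *)

theory Defs
  imports "HOL-Analysis.Analysis"
begin

definition gamma_coeff :: "nat \<Rightarrow> (nat \<Rightarrow> complex) \<Rightarrow> nat \<Rightarrow> complex" where
  "gamma_coeff N y0 m =
     (-1) ^ m * (\<Sum>S\<in>{S. S \<subseteq> {1..N} \<and> card S = m}. \<Prod>n\<in>S. y0 n)"

end

theory Submission
  imports Defs "HOL-Computational_Algebra.Polynomial"
begin

text \<open>Write \<open>Q(t, z) = \<Prod>\<^sub>n (z - y\<^sub>n(t))\<close>. Differentiating in \<open>t\<close> and inserting
  the equations of motion gives exactly the Lagrange interpolation formula, at the nodes
  \<open>y\<^sub>n(t)\<close>, of the polynomial \<open>D(z) = \<Sum>\<^sub>m (c\<^sub>m - \<gamma>\<^sub>m(0)) z\<^sup>N\<^sup>-\<^sup>m\<close> of degree below \<open>N\<close>;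
  hence \<open>\<partial>\<^sub>t Q(t, z) = D(z)\<close> and \<open>Q(1, z) = Q(0, z) + D(z) = P\<^sub>N(z)\<close>.\<close>

lemma lagrange_interpolation:
  fixes x :: "'i \<Rightarrow> 'a::field" and p :: "'a poly"
  assumes fin: "finite A" and inj: "inj_on x A" and deg: "degree p < card A"
  shows "(\<Sum>n\<in>A. poly p (x n) / (\<Prod>l\<in>A-{n}. x n - x l) * (\<Prod>l\<in>A-{n}. z - x l)) = poly p z"
proof -
  define L where "L = (\<Sum>n\<in>A. smult (poly p (x n) / (\<Prod>l\<in>A-{n}. x n - x l))
                                 (\<Prod>l\<in>A-{n}. [:- x l, 1:]))"
  have poly_L: "poly L w =
      (\<Sum>n\<in>A. poly p (x n) / (\<Prod>l\<in>A-{n}. x n - x l) * (\<Prod>l\<in>A-{n}. w - x l))" for w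
    by (simp add: L_def poly_sum poly_prod)
  have "degree L \<le> card A - 1"
    unfolding L_def
  proof (intro degree_sum_le fin)
    fix n assume "n \<in> A"
    have "degree (\<Prod>l\<in>A-{n}. [:- x l, 1:]) \<le> card A - 1"
      using degree_prod_sum_le[of "A-{n}" "\<lambda>l. [:- x l, 1:]"] fin \<open>n \<in> A\<close> by simp
    then show "degree (smult (poly p (x n) / (\<Prod>l\<in>A-{n}. x n - x l))
                              (\<Prod>l\<in>A-{n}. [:- x l, 1:])) \<le> card A - 1"
      using degree_smult_le order_trans by blast
  qed
  then have deg_L: "degree L < card (x ` A)"
    using deg card_image[OF inj] by linarith
  have "poly L (x k) = poly p (x k)" if k: "k \<in> A" for k
  proof -
    have "poly L (x k) =
        poly p (x k) / (\<Prod>l\<in>A-{k}. x k - x l) * (\<Prod>l\<in>A-{k}. x k - x l)"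
      unfolding poly_L using fin k
      by (subst sum.remove[OF fin k], subst sum.neutral) (auto intro!: prod_zero)
    moreover have "(\<Prod>l\<in>A-{k}. x k - x l) \<noteq> 0"
      using fin inj k by (auto simp: inj_on_def)
    ultimately show ?thesis by simp
  qed
  then have "L = p"
    using poly_eqI_degree[of "x ` A" L p] deg_L deg card_image[OF inj] by auto
  then show ?thesis
    by (metis poly_L)
qed

lemma prod_linear_factors_has_vector_derivative:
  fixes y :: "'i \<Rightarrow> real \<Rightarrow> 'a::real_normed_field" and q :: "'a poly"
  assumes fin: "finite A" and inj: "inj_on (\<lambda>n. y n t) A" and deg: "degree q < card A"
    and ode: "\<And>n. n \<in> A \<Longrightarrow>
      (y n has_vector_derivative - (\<Prod>l\<in>A-{n}. inverse (y n t - y l t)) * poly q (y n t)) (at t within S)"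
  shows "((\<lambda>t. \<Prod>n\<in>A. z - y n t) has_vector_derivative poly q z) (at t within S)"
proof -
  define v where "v n = (\<Prod>l\<in>A-{n}. inverse (y n t - y l t)) * poly q (y n t)" for n
  have "((\<lambda>t. z - y n t) has_vector_derivative v n) (at t within S)" if "n \<in> A" for n
    using has_vector_derivative_diff[OF has_vector_derivative_const ode[OF that]]
    by (simp add: v_def)
  then have "((\<lambda>t. \<Prod>n\<in>A. z - y n t) has_derivative
      (\<lambda>h. \<Sum>n\<in>A. h *\<^sub>R v n * (\<Prod>l\<in>A-{n}. z - y l t))) (at t within S)"
    unfolding has_vector_derivative_def by (rule has_derivative_prod)
  moreover have "(\<Sum>n\<in>A. v n * (\<Prod>l\<in>A-{n}. z - y l t)) = poly q z"
    using lagrange_interpolation[OF fin inj deg, of z]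
    by (simp add: v_def prod_inversef[symmetric] o_def divide_inverse mult.commute)
  ultimately show ?thesis
    unfolding has_vector_derivative_def by (simp add: scaleR_sum_right[symmetric])
qed

lemma gamma_coeff_0: "gamma_coeff N y 0 = 1"
proof -
  have "{S. S \<subseteq> {1..N} \<and> card S = 0} = {{}}"
    by (force simp: card_eq_0_iff dest: finite_subset[OF _ finite_atLeastAtMost])
  then show ?thesis
    by (simp add: gamma_coeff_def)
qed

lemma prod_linear_factors_eq_gamma_coeff:
  fixes y :: "nat \<Rightarrow> complex"
  shows "(\<Prod>n=1..N. (z - y n)) = z ^ N + (\<Sum>m=1..N. gamma_coeff N y m * z ^ (N - m))"
proof -
  let ?A = "{1..N::nat}"
  have "(\<Prod>n\<in>?A. (z - y n)) = (\<Prod>n\<in>?A. (- y n) + z)"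
    by simp
  also have "\<dots> = (\<Sum>X\<in>Pow ?A. (\<Prod>n\<in>X. - y n) * (\<Prod>n\<in>?A-X. z))"
    by (rule prod_add) simp
  also have "\<dots> = (\<Sum>X\<in>Pow ?A. (-1)^card X * (\<Prod>n\<in>X. y n) * z ^ (N - card X))"
  proof (intro sum.cong refl)
    fix X assume X: "X \<in> Pow ?A"
    then have fX: "finite X" by (auto intro: finite_subset)
    have "card (?A - X) = N - card X" using X by (simp add: card_Diff_subset fX)
    then show "(\<Prod>n\<in>X. - y n) * (\<Prod>n\<in>?A-X. z) = (-1)^card X * (\<Prod>n\<in>X. y n) * z ^ (N - card X)"
      by (simp add: prod_uminus)
  qed
  also have "\<dots> = (\<Sum>m\<in>{0..N}. \<Sum>X\<in>{X. X \<in> Pow ?A \<and> card X = m}.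
      (-1)^card X * (\<Prod>n\<in>X. y n) * z ^ (N - card X))"
    by (rule sum.group[symmetric]) (auto intro: card_mono[of ?A, simplified])
  also have "\<dots> = (\<Sum>m\<in>{0..N}. gamma_coeff N y m * z ^ (N - m))"
  proof (intro sum.cong refl)
    fix m
    have "{X. X \<in> Pow ?A \<and> card X = m} = {S. S \<subseteq> ?A \<and> card S = m}" by auto
    then show "(\<Sum>X\<in>{X. X \<in> Pow ?A \<and> card X = m}. (-1)^card X * (\<Prod>n\<in>X. y n) * z ^ (N - card X))
       = gamma_coeff N y m * z ^ (N - m)"
      by (simp add: gamma_coeff_def sum_distrib_left sum_distrib_right mult.assoc)
  qed
  also have "\<dots> = gamma_coeff N y 0 * z ^ N + (\<Sum>m=1..N. gamma_coeff N y m * z ^ (N - m))"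
    by (simp add: sum.atLeast_Suc_atMost)
  finally show ?thesis
    by (simp add: gamma_coeff_0)
qed

theorem mainTheorem1:
  fixes N :: nat
    and c :: "nat \<Rightarrow> complex"
    and y :: "nat \<Rightarrow> real \<Rightarrow> complex"
  assumes N2: "N \<ge> 2"
    and init_distinct: "\<And>n l. n \<in> {1..N} \<Longrightarrow> l \<in> {1..N} \<Longrightarrow> n \<noteq> l \<Longrightarrow> y n 0 \<noteq> y l 0"
    and ode: "\<And>n t. n \<in> {1..N} \<Longrightarrow> t \<in> {0..1} \<Longrightarrow>
       (y n has_vector_derivative
          (- (\<Prod>l\<in>{1..N} - {n}. inverse (y n t - y l t))
             * (\<Sum>m=1..N. (c m - gamma_coeff N (\<lambda>k. y k 0) m) * (y n t) ^ (N - m))))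
       (at t within {0..1})"
    and distinct: "\<And>n l t. n \<in> {1..N} \<Longrightarrow> l \<in> {1..N} \<Longrightarrow> n \<noteq> l \<Longrightarrow> t \<in> {0..1}
       \<Longrightarrow> y n t \<noteq> y l t"
  shows "\<forall>z::complex. z ^ N + (\<Sum>m=1..N. c m * z ^ (N - m)) = (\<Prod>n=1..N. (z - y n 1))"
proof
  fix z :: complex
  define q where "q = (\<Sum>m=1..N. monom (c m - gamma_coeff N (\<lambda>k. y k 0) m) (N - m))"
  define Q where "Q t = (\<Prod>n=1..N. z - y n t)" for t
  have poly_q: "poly q w = (\<Sum>m=1..N. (c m - gamma_coeff N (\<lambda>k. y k 0) m) * w ^ (N - m))" for w
    by (simp add: q_def poly_sum poly_monom)
  have "degree q \<le> N - 1"
    unfolding q_def by (intro degree_sum_le) (auto intro: order_trans[OF degree_monom_le])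
  then have "degree q < N"
    using N2 by linarith
  have "(Q has_vector_derivative poly q z) (at t within {0..1})" if t: "t \<in> {0..1}" for t
    unfolding Q_def
  proof (rule prod_linear_factors_has_vector_derivative)
    show "inj_on (\<lambda>n. y n t) {1..N}"
      unfolding inj_on_def using distinct t by blast
  qed (use \<open>degree q < N\<close> ode[OF _ t] in \<open>simp_all add: poly_q\<close>)
  then have "((\<lambda>_::real. poly q z) has_integral Q 1 - Q 0) {0..1}"
    using fundamental_theorem_of_calculus[of 0 1 Q "\<lambda>_. poly q z"] by simp
  moreover have "((\<lambda>_::real. poly q z) has_integral poly q z) {0..1}"
    using has_integral_const_real[of "poly q z" 0 1] by simp
  ultimately have "Q 1 - Q 0 = poly q z"
    by (rule has_integral_unique)
  then have "Q 1 = Q 0 + poly q z"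
    by (simp add: algebra_simps)
  moreover have "Q 0 = z ^ N + (\<Sum>m=1..N. gamma_coeff N (\<lambda>k. y k 0) m * z ^ (N - m))"
    unfolding Q_def by (rule prod_linear_factors_eq_gamma_coeff)
  moreover have "poly q z = (\<Sum>m=1..N. c m * z ^ (N - m))
      - (\<Sum>m=1..N. gamma_coeff N (\<lambda>k. y k 0) m * z ^ (N - m))"
    by (simp add: poly_q left_diff_distrib sum_subtractf)
  ultimately have "Q 1 = z ^ N + (\<Sum>m=1..N. c m * z ^ (N - m))"
    by (simp add: algebra_simps)
  then show "z ^ N + (\<Sum>m=1..N. c m * z ^ (N - m)) = (\<Prod>n=1..N. z - y n 1)"
    by (simp add: Q_def)
qed

end
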